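(* Let $f$ be a real (or complex) polynomial of exact degree $d\ge0$. Define functions on integers by $F_0(x)=1$ and, for $i\ge1$ and integers $x\ge i-1$, $$F_i(x)=\sum_{m=i}^{x}f(m-i+1)\,F_{i-1}(m)$$ (an empty sum being $0$). Then for each $i\ge 0$ there is a polynomial $P_i$ of exact degree $i(d+1)$ such that $F_i(x)=P_i(x)$ for all integers $x\ge i-1$. In particular, if $\lambda_p\mu_p=f(p)$ for all $p\ge1$, then the quantity $c_{k,\delta}$ equals $\big(\prod_{i=1}^{\delta}\lambda_i\big)P_j\big((k+\delta)/2\big)$ with $j=(k-\delta)/2$, where $P_j$ is a polynomial of degree $j(d+1)$ not depending on $\delta$ (so for $\delta=0$, $c_{k,0}$ is the value at $k/2$ of a polynomial of degree $\tfrac{k}{2}(d+1)$).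
   Context: $c_{k,\delta}=\big(\prod_{i=1}^{\delta}\lambda_i\big)\sum\prod_{i=1}^{j}\lambda_{m_i-i+1}\mu_{m_i-i+1}$, the sum ranging over integer tuples $(m_1,\dots,m_j)$ with $m_i\ge i$ and $m_1\le m_2\le\cdots\le m_j\le (k+\delta)/2$, where $j=(k-\delta)/2$, $0\le\delta\le k$, $k-\delta$ even, and $\lambda_i,\mu_i$ are scalars. *)

theory Defs
  imports "HOL-Computational_Algebra.Polynomial"
begin

text \<open>F f i x: F_0(x) = 1 and, for i >= 1,
  F_i(x) = sum over m = i..x of f(m-i+1) * F_{i-1}(m)  (empty sum = 0).
  Writing i = Suc i', the factor f(m - i + 1) is f(m - i').\<close>
fun Fseq :: "complex poly \<Rightarrow> nat \<Rightarrow> int \<Rightarrow> complex" where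
  "Fseq f 0 x = 1"
| "Fseq f (Suc i) x =
     (\<Sum>m\<in>{int (Suc i)..x}. poly f (of_int (m - int i)) * Fseq f i m)"

text \<open>Tuples (m_1,...,m_j) are encoded as lists ms of length j with ms!(i-1) = m_i.
  Conditions: m_i >= i, nondecreasing, m_j <= (k+delta)/2.\<close>
definition ctuples :: "nat \<Rightarrow> nat \<Rightarrow> nat list set" where
  "ctuples j N = {ms. length ms = j \<and> sorted ms \<and>
                      (\<forall>i<j. i + 1 \<le> ms ! i) \<and> (\<forall>i<j. ms ! i \<le> N)}"

text \<open>c_{k,delta} = (prod_{i=1}^delta lambda_i) * sum prod_{i=1}^j lambda_{m_i-i+1} mu_{m_i-i+1},
  with j = (k-delta)/2 and upper bound (k+delta)/2.  With 0-based index i0 = i-1,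
  m_i - i + 1 = ms!i0 - i0.\<close>
definition ccoef :: "(nat \<Rightarrow> complex) \<Rightarrow> (nat \<Rightarrow> complex) \<Rightarrow> nat \<Rightarrow> nat \<Rightarrow> complex" where
  "ccoef lam mu k \<delta> =
     (\<Prod>i=1..\<delta>. lam i) *
     (\<Sum>ms\<in>ctuples ((k - \<delta>) div 2) ((k + \<delta>) div 2).
        \<Prod>i<(k - \<delta>) div 2. lam (ms ! i - i) * mu (ms ! i - i))"

end

(* F_(i+1)(x) is the sum over m = i+1..x of g(m), where g = f(X - i) P_i. Over a field of
   characteristic 0 every nonzero polynomial g has a backward antidifference Q,
   Q(x) - Q(x-1) = g(x), of degree deg g + 1 (built from rising factorials), so the sum
   telescopes to Q(x) - Q(i) and P_(i+1) = Q - Q(i) has degree d + i(d+1) + 1 = (i+1)(d+1).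
   For c_(k,delta), splitting off the last entry m_j of the tuple turns the tuple sum into
   exactly the recursion defining F_j, evaluated at (k+delta)/2. *)
theory Submission
  imports Defs
begin

lemma poly_pochhammer_X: "poly (pochhammer [:0, 1:] k) x = pochhammer (x :: 'a :: comm_semiring_1) k"
  by (simp add: pochhammer_prod poly_prod)

lemma degree_pochhammer_X:
  "degree (pochhammer [:0, 1 :: 'a :: comm_semiring_1:] k) = k
   \<and> coeff (pochhammer [:0, 1 :: 'a:] k) k = 1"
proof (induction k)
  case (Suc k)
  let ?p = "pochhammer [:0, 1 :: 'a:] k"
  have split: "pochhammer [:0, 1 :: 'a:] (Suc k) = [:of_nat k, 1:] * ?p"
    by (simp add: pochhammer_rec' of_nat_poly)
  have lead: "coeff (pochhammer [:0, 1 :: 'a:] (Suc k)) (Suc k) = 1"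
    using coeff_mult_degree_sum[of "[:of_nat k, 1 :: 'a:]" ?p] Suc by (simp add: split)
  moreover have "degree (pochhammer [:0, 1 :: 'a:] (Suc k)) \<le> Suc k"
    using degree_mult_le[of "[:of_nat k, 1 :: 'a:]" ?p] Suc by (simp add: split)
  ultimately show ?case
    by (metis antisym le_degree one_neq_zero)
qed simp

lemma pochhammer_backward_difference:
  "pochhammer x (Suc k) - pochhammer (x - 1) (Suc k) = of_nat (Suc k) * pochhammer (x :: 'a :: comm_ring_1) k"
proof -
  have "pochhammer (x - 1) (Suc k) = (x - 1) * pochhammer x k"
    by (simp add: pochhammer_rec)
  then show ?thesis
    by (simp add: pochhammer_rec' algebra_simps)
qed

text \<open>Subtracting a multiple of the rising factorial polynomial of degree n+1 lowers the degree,
  and the backward difference of the rising factorial of degree n+2 is a known multiple of it.\<close>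
lemma poly_backward_antidifference:
  fixes g :: "'a :: field_char_0 poly"
  assumes "degree g \<le> n"
  shows "\<exists>Q. (\<forall>x. poly Q x - poly Q (x - 1) = poly g x)
             \<and> degree Q \<le> n + 1 \<and> coeff Q (n + 1) = coeff g n / of_nat (n + 1)"
  using assms
proof (induction n arbitrary: g)
  case 0
  then obtain a where g: "g = [:a:]"
    using degree_eq_zeroE by blast
  show ?case
    by (rule exI[of _ "[:0, a:]"]) (auto simp: g algebra_simps)
next
  case (Suc n)
  let ?R = "\<lambda>k. pochhammer [:0, 1 :: 'a:] k"
  define c where "c = coeff g (Suc n)"
  define h where "h = g - smult c (?R (Suc n))"
  have "degree h \<le> n"
  proof (rule degree_le, intro allI impI)
    fix i assume "n < i"
    then consider "i = Suc n" | "Suc n < i"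
      by linarith
    then show "coeff h i = 0"
      using degree_pochhammer_X[of "Suc n", where 'a = 'a] Suc.prems
      by cases (auto simp: h_def c_def coeff_eq_0)
  qed
  then obtain Q1 where Q1: "\<forall>x. poly Q1 x - poly Q1 (x - 1) = poly h x" "degree Q1 \<le> n + 1"
    using Suc.IH by blast
  define Q where "Q = smult (c / of_nat (Suc n + 1)) (?R (Suc (Suc n))) + Q1"
  have "poly Q x - poly Q (x - 1) = poly g x" for x
  proof -
    have "poly Q x - poly Q (x - 1)
        = c / of_nat (Suc n + 1) * (pochhammer x (Suc (Suc n)) - pochhammer (x - 1) (Suc (Suc n)))
          + (poly Q1 x - poly Q1 (x - 1))"
      by (simp add: Q_def poly_pochhammer_X algebra_simps)
    also have "\<dots> = c * pochhammer x (Suc n) + poly h x"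
      unfolding pochhammer_backward_difference using Q1(1) by (simp del: of_nat_Suc)
    finally show ?thesis
      by (simp add: h_def poly_pochhammer_X)
  qed
  moreover have "degree Q \<le> Suc n + 1"
    unfolding Q_def using degree_pochhammer_X[of "Suc (Suc n)", where 'a = 'a] Q1(2)
    by (intro degree_add_le order.trans[OF degree_smult_le]) auto
  moreover have "coeff Q (Suc n + 1) = coeff g (Suc n) / of_nat (Suc n + 1)"
    unfolding Q_def using degree_pochhammer_X[of "Suc (Suc n)", where 'a = 'a] Q1(2)
    by (simp add: c_def coeff_eq_0)
  ultimately show ?case
    by blast
qed

lemma poly_backward_antidifference_nonzero:
  fixes g :: "'a :: field_char_0 poly"
  assumes "g \<noteq> 0"
  obtains Q where "\<And>x. poly Q x - poly Q (x - 1) = poly g x" and "degree Q = degree g + 1"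
proof -
  obtain Q where Q: "\<forall>x. poly Q x - poly Q (x - 1) = poly g x" "degree Q \<le> degree g + 1"
    "coeff Q (degree g + 1) = lead_coeff g / of_nat (degree g + 1)"
    using poly_backward_antidifference[of g "degree g"] by blast
  have "coeff Q (degree g + 1) \<noteq> 0"
    using assms by (simp only: Q(3)) (simp del: of_nat_Suc)
  then have "degree Q = degree g + 1"
    using Q(2) le_degree antisym by blast
  with Q(1) show thesis
    using that by blast
qed

lemma sum_int_atLeastAtMost_telescope:
  fixes u :: "int \<Rightarrow> 'a :: ab_group_add"
  assumes "a - 1 \<le> b"
  shows "(\<Sum>m\<in>{a..b}. u m - u (m - 1)) = u b - u (a - 1)"
  using assms
proof (induction b rule: int_ge_induct)
  case (step b)
  have "{a..b + 1} = insert (b + 1) {a..b}"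
    using step.hyps by auto
  then show ?case
    using step.IH by simp
qed simp

lemma Fseq_polynomial:
  assumes "f \<noteq> 0"
  shows "\<exists>P. P \<noteq> 0 \<and> degree P = i * (degree f + 1)
             \<and> (\<forall>x::int. x \<ge> int i - 1 \<longrightarrow> Fseq f i x = poly P (of_int x))"
proof (induction i)
  case 0
  show ?case
    by (rule exI[of _ 1]) simp
next
  case (Suc i)
  then obtain P where P: "P \<noteq> 0" "degree P = i * (degree f + 1)"
    "\<And>x::int. x \<ge> int i - 1 \<Longrightarrow> Fseq f i x = poly P (of_int x)"
    by blast
  define g where "g = pcompose f [:- of_nat i, 1:] * P"
  have "pcompose f [:- of_nat i, 1:] \<noteq> 0"
    using assms by (simp add: pcompose_eq_0_iff)
  then have "g \<noteq> 0" and deg_g: "degree g = degree f + i * (degree f + 1)"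
    using P(1,2) by (simp_all add: g_def degree_mult_eq degree_pcompose)
  then obtain Q where Q: "\<And>x. poly Q x - poly Q (x - 1) = poly g x" "degree Q = degree g + 1"
    using poly_backward_antidifference_nonzero by blast
  \<comment> \<open>normalised so that \<open>P' i = 0\<close>, matching the empty sum \<open>Fseq f (Suc i) i\<close>\<close>
  define P' where "P' = Q + [:- poly Q (of_nat i):]"
  have deg_P': "degree P' = Suc i * (degree f + 1)"
    using Q(2) deg_g unfolding P'_def by (subst degree_add_eq_left) auto
  have "Fseq f (Suc i) x = poly P' (of_int x)" if "x \<ge> int (Suc i) - 1" for x
  proof -
    have "Fseq f (Suc i) x = (\<Sum>m\<in>{int (Suc i)..x}. poly g (of_int m))"
      using P(3) by (auto simp: g_def poly_pcompose intro!: sum.cong)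
    also have "\<dots> = (\<Sum>m\<in>{int (Suc i)..x}. poly Q (of_int m) - poly Q (of_int (m - 1)))"
      using Q(1) by simp
    also have "\<dots> = poly Q (of_int x) - poly Q (of_nat i)"
      using that by (subst sum_int_atLeastAtMost_telescope) auto
    finally show ?thesis
      by (simp add: P'_def)
  qed
  moreover have "P' \<noteq> 0"
    using deg_P' by (metis degree_0 mult_is_0 add_is_0 nat.distinct(1) one_neq_zero)
  ultimately show ?case
    using deg_P' by blast
qed

lemma finite_ctuples: "finite (ctuples j m)"
proof (rule finite_subset[OF _ finite_lists_length_eq[of "{0..m}" j]])
  show "ctuples j m \<subseteq> {xs. set xs \<subseteq> {0..m} \<and> length xs = j}"
    by (auto simp: ctuples_def in_set_conv_nth)
qed simp

lemma snoc_in_ctuples: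
  assumes "m \<in> {Suc j..N}" and "ms \<in> ctuples j m"
  shows "ms @ [m] \<in> ctuples (Suc j) N"
proof -
  have len: "length ms = j" and "sorted ms" and lo: "\<forall>i<j. i + 1 \<le> ms ! i"
    and hi: "\<forall>i<j. ms ! i \<le> m"
    using assms(2) by (auto simp: ctuples_def)
  have "\<forall>x\<in>set ms. x \<le> m"
    using hi len by (auto simp: in_set_conv_nth)
  with \<open>sorted ms\<close> have "sorted (ms @ [m])"
    by (simp add: sorted_append)
  moreover have "\<forall>i<Suc j. i + 1 \<le> (ms @ [m]) ! i \<and> (ms @ [m]) ! i \<le> N"
    using lo hi assms(1) len by (auto simp: nth_append less_Suc_eq)
  ultimately show ?thesis
    using len by (simp add: ctuples_def)
qed

lemma butlast_in_ctuples:
  assumes "ms \<in> ctuples (Suc j) N"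
  shows "last ms \<in> {Suc j..N}" and "butlast ms \<in> ctuples j (last ms)"
proof -
  have len: "length ms = Suc j" and "sorted ms" and lo: "\<forall>i<Suc j. i + 1 \<le> ms ! i"
    and hi: "\<forall>i<Suc j. ms ! i \<le> N"
    using assms by (auto simp: ctuples_def)
  have last: "last ms = ms ! j"
    using len by (metis diff_Suc_1 last_conv_nth list.size(3) nat.distinct(1))
  show "last ms \<in> {Suc j..N}"
    using lo hi last by auto
  have "\<forall>i<j. ms ! i \<le> ms ! j"
    using \<open>sorted ms\<close> len by (auto intro: sorted_nth_mono)
  then show "butlast ms \<in> ctuples j (last ms)"
    using \<open>sorted ms\<close> len lo last by (simp add: ctuples_def sorted_butlast nth_butlast)
qed

lemma bij_betw_snoc_ctuples:
  "bij_betw (\<lambda>(m, ms). ms @ [m]) (SIGMA m:{Suc j..N}. ctuples j m) (ctuples (Suc j) N)"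
proof (rule bij_betw_byWitness[where f' = "\<lambda>ms. (last ms, butlast ms)"])
  have "ms \<noteq> []" if "ms \<in> ctuples (Suc j) N" for ms
    using that by (auto simp: ctuples_def)
  then show "\<forall>ms\<in>ctuples (Suc j) N. (\<lambda>(m, ms). ms @ [m]) (last ms, butlast ms) = ms"
    by simp
qed (auto intro: snoc_in_ctuples butlast_in_ctuples)

lemma prod_snoc_nth_lessThan:
  assumes "length ms = j"
  shows "(\<Prod>i<Suc j. h ((ms @ [m]) ! i - i)) = h (m - j) * (\<Prod>i<j. h (ms ! i - i))"
proof -
  have "(\<Prod>i<j. h ((ms @ [m]) ! i - i)) = (\<Prod>i<j. h (ms ! i - i))"
    using assms by (intro prod.cong) (auto simp: nth_append)
  then show ?thesis
    using assms by (simp add: prod.lessThan_Suc nth_append mult.commute)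
qed

lemma sum_ctuples_eq_Fseq:
  "(\<Sum>ms\<in>ctuples j N. \<Prod>i<j. poly f (of_nat (ms ! i - i))) = Fseq f j (int N)"
proof (induction j arbitrary: N)
  case 0
  have "ctuples 0 N = {[]}"
    by (auto simp: ctuples_def)
  then show ?case
    by simp
next
  case (Suc j)
  let ?h = "\<lambda>n. poly f (of_nat n)"
  have "(\<Sum>ms\<in>ctuples (Suc j) N. \<Prod>i<Suc j. ?h (ms ! i - i))
      = (\<Sum>(m, ms)\<in>(SIGMA m:{Suc j..N}. ctuples j m). \<Prod>i<Suc j. ?h ((ms @ [m]) ! i - i))"
    using sum.reindex_bij_betw[OF bij_betw_snoc_ctuples, symmetric] by (simp add: case_prod_unfold)
  also have "\<dots> = (\<Sum>m\<in>{Suc j..N}. \<Sum>ms\<in>ctuples j m. \<Prod>i<Suc j. ?h ((ms @ [m]) ! i - i))"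
    by (rule sum.Sigma[symmetric]) (auto simp: finite_ctuples)
  also have "\<dots> = (\<Sum>m\<in>{Suc j..N}. \<Sum>ms\<in>ctuples j m. ?h (m - j) * (\<Prod>i<j. ?h (ms ! i - i)))"
    by (intro sum.cong refl prod_snoc_nth_lessThan) (simp add: ctuples_def)
  also have "\<dots> = (\<Sum>m\<in>{Suc j..N}. ?h (m - j) * Fseq f j (int m))"
    by (simp add: sum_distrib_left[symmetric] Suc.IH)
  also have "\<dots> = (\<Sum>m\<in>int ` {Suc j..N}. poly f (of_int (m - int j)) * Fseq f j m)"
    by (subst sum.reindex) (auto intro!: sum.cong simp: of_nat_diff)
  also have "\<dots> = Fseq f (Suc j) (int N)"
    by (simp only: image_int_atLeastAtMost Fseq.simps)
  finally show ?case .
qed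

lemma ccoef_eq_Fseq:
  assumes "\<forall>p\<ge>1. lam p * mu p = poly f (of_nat p)"
  shows "ccoef lam mu k \<delta> = (\<Prod>i=1..\<delta>. lam i) * Fseq f ((k - \<delta>) div 2) (int ((k + \<delta>) div 2))"
proof -
  have "lam (ms ! i - i) * mu (ms ! i - i) = poly f (of_nat (ms ! i - i))"
    if "ms \<in> ctuples j N" "i < j" for ms i j N
    using that assms by (auto simp: ctuples_def)
  then show ?thesis
    unfolding ccoef_def sum_ctuples_eq_Fseq[symmetric]
    by (intro arg_cong2[where f = "(*)"] sum.cong prod.cong refl) auto
qed

theorem mainTheorem7:
  fixes f :: "complex poly" and d :: nat
  assumes "f \<noteq> 0" and "degree f = d"
  shows "\<exists>P :: nat \<Rightarrow> complex poly.
     (\<forall>i. P i \<noteq> 0 \<and> degree (P i) = i * (d + 1) \<and>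
          (\<forall>x::int. x \<ge> int i - 1 \<longrightarrow> Fseq f i x = poly (P i) (of_int x))) \<and>
     (\<forall>lam mu :: nat \<Rightarrow> complex.
        (\<forall>p\<ge>1. lam p * mu p = poly f (of_nat p)) \<longrightarrow>
        (\<forall>k \<delta>. \<delta> \<le> k \<longrightarrow> even (k - \<delta>) \<longrightarrow>
           ccoef lam mu k \<delta> =
             (\<Prod>i=1..\<delta>. lam i) * poly (P ((k - \<delta>) div 2)) (of_nat ((k + \<delta>) div 2))))"
proof -
  obtain P where P: "\<And>i. P i \<noteq> 0 \<and> degree (P i) = i * (d + 1)
      \<and> (\<forall>x::int. x \<ge> int i - 1 \<longrightarrow> Fseq f i x = poly (P i) (of_int x))"
    using Fseq_polynomial[OF assms(1)] assms(2) by metis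
  have "ccoef lam mu k \<delta> = (\<Prod>i=1..\<delta>. lam i) * poly (P ((k - \<delta>) div 2)) (of_nat ((k + \<delta>) div 2))"
    if "\<forall>p\<ge>1. lam p * mu p = poly f (of_nat p)" for lam mu k \<delta>
  proof -
    have "(k - \<delta>) div 2 \<le> (k + \<delta>) div 2"
      by (intro div_le_mono) simp
    then show ?thesis
      using ccoef_eq_Fseq[OF that] P by simp
  qed
  with P show ?thesis
    by blast
qed

end
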